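(* Let $C$ be a program, let $F=\{f_1\preceq f_2\preceq\cdots\}$ be an $\omega$-chain in $\mathbb{T}$, let $f,g\in\mathbb{T}$, and let $u\in\mathbb{T}$ be a constant runtime. Then: (1) ($\omega$-continuity) $\mathsf{ert}[\![C]\!](\sup F)=\sup\{\mathsf{ert}[\![C]\!](f')\mid f'\in F\}$; (2) (monotonicity) $f\preceq g$ implies $\mathsf{ert}[\![C]\!](f)\preceq\mathsf{ert}[\![C]\!](g)$; (3) (sub-additivity) $\mathsf{ert}[\![C]\!](f+g)\preceq\mathsf{ert}[\![C]\!](f)+\mathsf{ert}[\![C]\!](g)$; (4) (constant propagation) $\mathsf{ert}[\![C]\!](u+f)\preceq u+\mathsf{ert}[\![C]\!](f)$.
   Context: States and programs. Fix a finite set $\mathrm{Vars}$ of variables; values are $\mathbb{N}$, locations are $\mathbb{N}_{>0}$. A stack is $s\colon \mathrm{Vars}\to\mathbb{N}$; a heap is a partial map $h$ from a finite set $\mathrm{dom}(h)\subseteq\mathbb{N}_{>0}$ to $\mathbb{N}$. $h_1\perp h_2$ means disjoint domains; then $h_1\star h_2$ is their union; $h_\emptyset$ is the empty heap. $\mathsf{States}$ is the set of pairs $(s,h)$. $s(e)$ is the value of a (heap-independent) arithmetic expression $e$ under $s$, $s\models\varphi$ means the Boolean expression $\varphi$ holds under $s$, $s[x\mapsto v]$ is the updated stack. Programs are generated by $C ::= \mathtt{tick}(e) \mid x:=e \mid x:=\mathtt{alloc}(e) \mid \langle e\rangle:=e' \mid x:=\langle e\rangle \mid \mathtt{free}(e)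 \mid \{C\}[p]\{C\} \mid \mathtt{if}(\varphi)\{C\}\mathtt{else}\{C\} \mid C;C \mid \mathtt{while}(\varphi)\{C\}$, where $p$ is an expression with $s(p)\in[0,1]\cap\mathbb{Q}$ for all $s$. Runtimes. $\mathbb{T}$ is the set of functions $\mathsf{States}\to[0,\infty]$, ordered pointwise by $\preceq$ (suprema pointwise); arithmetic is pointwise with $0\cdot\infty=0$. $[\varphi]$ is the $0/1$-valued Iverson bracket. Truncated subtraction: $a\dot- b=\max(a-b,0)$, $\infty\dot- b=\infty$ for finite $b$, $a\dot-\infty=0$. $(f\oplus g)(s,h)=\min\{f(s,h_1)+g(s,h_2)\mid h=h_1\star h_2\}$; $(f \mathbin{-\!\!\ominus} g)(s,h)=\sup\{g(s,h\star h')\dot- f(s,h')\mid h'\perp h\}$; $(\inf y\colon f)(s,h)=\inf_{v\in\mathbb{N}} f(s[y\mapsto v],h)$, $(\sup y\colon f)(s,h)=\sup_{v\in\mathbb{N}}f(s[y\mapsto v],h)$; $f[x/e](s,h)=f(s[x\mapsto s(e)],h)$. $\mathsf{tm}(e)(s,h)=s(e)$ if $h=h_\emptyset$, else $\infty$; $[e\mapsto e'](s,h)=0$ if $\mathrm{dom}(h)=\{s(e)\}$ and $h(s(e))=s(e')$, else $\infty$; $[e\mapsto -](s,h)=0$ if $\mathrm{dom}(h)=\{s(e)\}$, else $\infty$; $\bigoplus_{i=1}^{e} f_i$ is the separating sum over $i=1,\dots,s(e)$ (empty one: $[\mathsf{emp}]$, which is $0$ if $h=h_\emptyset$, else $\infty$).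 Expected runtime transformer $\mathsf{ert}[\![C]\!]\colon\mathbb{T}\to\mathbb{T}$ (with $v$ fresh): $\mathsf{ert}[\![\mathtt{tick}(e)]\!](f)=\mathsf{tm}(e)\oplus f$; $\mathsf{ert}[\![x:=e]\!](f)=f[x/e]$; $\mathsf{ert}[\![x:=\mathtt{alloc}(e)]\!](f)=\sup v\colon (\bigoplus_{i=1}^{e}[v+i-1\mapsto 0])\mathbin{-\!\!\ominus} f[x/v]$; $\mathsf{ert}[\![\langle e\rangle:=e']\!](f)=[e\mapsto-]\oplus([e\mapsto e']\mathbin{-\!\!\ominus} f)$; $\mathsf{ert}[\![x:=\langle e\rangle]\!](f)=\inf v\colon [e\mapsto v]\oplus([e\mapsto v]\mathbin{-\!\!\ominus} f[x/v])$; $\mathsf{ert}[\![\mathtt{free}(e)]\!](f)=[e\mapsto-]\oplus f$; $\mathsf{ert}[\![C_1;C_2]\!](f)=\mathsf{ert}[\![C_1]\!](\mathsf{ert}[\![C_2]\!](f))$; conditional: $[\varphi]\cdot\mathsf{ert}[\![C_1]\!](f)+[\neg\varphi]\cdot\mathsf{ert}[\![C_2]\!](f)$; probabilistic choice: $p\cdot\mathsf{ert}[\![C_1]\!](f)+(1-p)\cdot\mathsf{ert}[\![C_2]\!](f)$; $\mathsf{ert}[\![\mathtt{while}(\varphi)\{C\}]\!](f)=\mathrm{lfp}\, g.\ [\neg\varphi]\cdot f+[\varphi]\cdot\mathsf{ert}[\![C]\!](g)$ (least fixed point in $(\mathbb{T},\preceq)$). *)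

theory Defs
  imports Main "HOL-Library.Extended_Nonnegative_Real"
begin

type_synonym 'v stack = "'v \<Rightarrow> nat"

typedef heap = "{h :: nat \<rightharpoonup> nat. finite (dom h) \<and> 0 \<notin> dom h}"
  morphisms hmap Abs_heap
  by (rule exI[of _ Map.empty]) auto

definition hemp :: heap where "hemp = Abs_heap Map.empty"

definition hdisj :: "heap \<Rightarrow> heap \<Rightarrow> bool" where
  "hdisj h1 h2 \<longleftrightarrow> dom (hmap h1) \<inter> dom (hmap h2) = {}"

definition hunion :: "heap \<Rightarrow> heap \<Rightarrow> heap" where
  "hunion h1 h2 = Abs_heap (hmap h1 ++ hmap h2)"

type_synonym 'v rt = "'v stack \<times> heap \<Rightarrow> ennreal"

definition tsub :: "ennreal \<Rightarrow> ennreal \<Rightarrow> ennreal" where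
  "tsub a b = (if b = top then 0 else if a = top then top else a - b)"

definition iverson :: "('v stack \<Rightarrow> bool) \<Rightarrow> 'v rt" where
  "iverson \<phi> = (\<lambda>(s, h). if \<phi> s then 1 else 0)"

definition sep_conj :: "'v rt \<Rightarrow> 'v rt \<Rightarrow> 'v rt" where
  "sep_conj f g = (\<lambda>(s, h). INF p \<in> {(h1, h2). hdisj h1 h2 \<and> h = hunion h1 h2}.
                              f (s, fst p) + g (s, snd p))"

definition sep_wand :: "'v rt \<Rightarrow> 'v rt \<Rightarrow> 'v rt" where
  "sep_wand f g = (\<lambda>(s, h). SUP h' \<in> {h'. hdisj h' h}. tsub (g (s, hunion h h')) (f (s, h')))"

definition subst :: "'v rt \<Rightarrow> 'v \<Rightarrow> ('v stack \<Rightarrow> nat) \<Rightarrow> 'v rt" where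
  "subst f x e = (\<lambda>(s, h). f (s(x := e s), h))"

definition tm :: "('v stack \<Rightarrow> nat) \<Rightarrow> 'v rt" where
  "tm e = (\<lambda>(s, h). if h = hemp then of_nat (e s) else top)"

definition pts :: "('v stack \<Rightarrow> nat) \<Rightarrow> ('v stack \<Rightarrow> nat) \<Rightarrow> 'v rt" where
  "pts e e' = (\<lambda>(s, h). if dom (hmap h) = {e s} \<and> hmap h (e s) = Some (e' s) then 0 else top)"

definition pts_any :: "('v stack \<Rightarrow> nat) \<Rightarrow> 'v rt" where
  "pts_any e = (\<lambda>(s, h). if dom (hmap h) = {e s} then 0 else top)"

definition emp_rt :: "'v rt" where
  "emp_rt = (\<lambda>(s, h). if h = hemp then 0 else top)"

primrec bigsep :: "nat \<Rightarrow> (nat \<Rightarrow> 'v rt) \<Rightarrow> 'v rt" where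
  "bigsep 0 F = emp_rt"
| "bigsep (Suc n) F = sep_conj (bigsep n F) (F (Suc n))"

definition bigsep_e :: "('v stack \<Rightarrow> nat) \<Rightarrow> (nat \<Rightarrow> 'v rt) \<Rightarrow> 'v rt" where
  "bigsep_e e F = (\<lambda>(s, h). bigsep (e s) F (s, h))"

datatype 'v prog =
    Tick "'v stack \<Rightarrow> nat"
  | Assign 'v "'v stack \<Rightarrow> nat"
  | Alloc 'v "'v stack \<Rightarrow> nat"
  | Store "'v stack \<Rightarrow> nat" "'v stack \<Rightarrow> nat"
  | Load 'v "'v stack \<Rightarrow> nat"
  | Free "'v stack \<Rightarrow> nat"
  | PChoice "'v prog" "'v stack \<Rightarrow> real" "'v prog"
  | If "'v stack \<Rightarrow> bool" "'v prog" "'v prog"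
  | Seq "'v prog" "'v prog"
  | While "'v stack \<Rightarrow> bool" "'v prog"

primrec wf_prog :: "'v prog \<Rightarrow> bool" where
  "wf_prog (Tick e) = True"
| "wf_prog (Assign x e) = True"
| "wf_prog (Alloc x e) = True"
| "wf_prog (Store e e') = True"
| "wf_prog (Load x e) = True"
| "wf_prog (Free e) = True"
| "wf_prog (PChoice C1 p C2) = ((\<forall>s. p s \<in> {0..1} \<and> p s \<in> \<rat>) \<and> wf_prog C1 \<and> wf_prog C2)"
| "wf_prog (If \<phi> C1 C2) = (wf_prog C1 \<and> wf_prog C2)"
| "wf_prog (Seq C1 C2) = (wf_prog C1 \<and> wf_prog C2)"
| "wf_prog (While \<phi> C) = wf_prog C"

text \<open>The fresh variable v of the paper is rendered as a bound value \<open>v :: nat\<close>.\<close>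
primrec ert :: "'v prog \<Rightarrow> 'v rt \<Rightarrow> 'v rt" where
  "ert (Tick e) f = sep_conj (tm e) f"
| "ert (Assign x e) f = subst f x e"
| "ert (Alloc x e) f = (\<lambda>\<sigma>. SUP v::nat.
      sep_wand (bigsep_e e (\<lambda>i. pts (\<lambda>_. v + i - 1) (\<lambda>_. 0))) (subst f x (\<lambda>_. v)) \<sigma>)"
| "ert (Store e e') f = sep_conj (pts_any e) (sep_wand (pts e e') f)"
| "ert (Load x e) f = (\<lambda>\<sigma>. INF v::nat.
      sep_conj (pts e (\<lambda>_. v)) (sep_wand (pts e (\<lambda>_. v)) (subst f x (\<lambda>_. v))) \<sigma>)"
| "ert (Free e) f = sep_conj (pts_any e) f"
| "ert (PChoice C1 p C2) f =
     (\<lambda>\<sigma>. ennreal (p (fst \<sigma>)) * ert C1 f \<sigma> + ennreal (1 - p (fst \<sigma>)) * ert C2 f \<sigma>)"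
| "ert (If \<phi> C1 C2) f =
     (\<lambda>\<sigma>. iverson \<phi> \<sigma> * ert C1 f \<sigma> + iverson (\<lambda>s. \<not> \<phi> s) \<sigma> * ert C2 f \<sigma>)"
| "ert (Seq C1 C2) f = ert C1 (ert C2 f)"
| "ert (While \<phi> C) f =
     lfp (\<lambda>g \<sigma>. iverson (\<lambda>s. \<not> \<phi> s) \<sigma> * f \<sigma> + iverson \<phi> \<sigma> * ert C g \<sigma>)"

end

theory Submission
  imports Defs
begin

(* Call a runtime transformer healthy if it is omega-continuous, subadditive and propagates
   constants; monotonicity follows from continuity. Heap predicates such as [e |-> e'] take only
   the values 0 and infinity, so separating conjunctions and magic wands with them collapse to
   heap lookups and updates: the expected runtime of every atomic command is, at each state,
   either infinity (a memory fault) or a supremum of values of f at successor states, plus a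
   constant cost for tick. Such transformers are healthy, and healthiness is preserved by
   composition, by subconvex combinations (probabilistic choice and conditionals) and by the
   least fixed point defining a loop. For the loop, continuity of lfp in a continuous parameter
   is standard, while subadditivity and constant propagation follow by Park induction: the sum
   of two least fixed points, and a constant plus a least fixed point, are prefixed points of
   the loop functional for the summed, respectively shifted, postruntime. *)

section \<open>Healthy runtime transformers\<close>

type_synonym 's transformer = "('s \<Rightarrow> ennreal) \<Rightarrow> 's \<Rightarrow> ennreal"

definition subadditive :: "'s transformer \<Rightarrow> bool" where
  "subadditive T \<longleftrightarrow> (\<forall>f g. T (\<lambda>\<sigma>. f \<sigma> + g \<sigma>) \<le> (\<lambda>\<sigma>. T f \<sigma> + T g \<sigma>))"

definition propagates_constants :: "'s transformer \<Rightarrow> bool" where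
  "propagates_constants T \<longleftrightarrow> (\<forall>c f. T (\<lambda>\<sigma>. c + f \<sigma>) \<le> (\<lambda>\<sigma>. c + T f \<sigma>))"

definition healthy :: "'s transformer \<Rightarrow> bool" where
  "healthy T \<longleftrightarrow> sup_continuous T \<and> subadditive T \<and> propagates_constants T"

lemma subadditiveI:
  "(\<And>f g \<sigma>. T (\<lambda>\<sigma>. f \<sigma> + g \<sigma>) \<sigma> \<le> T f \<sigma> + T g \<sigma>) \<Longrightarrow> subadditive T"
  by (simp add: subadditive_def le_fun_def)

lemma subadditiveD: "subadditive T \<Longrightarrow> T (\<lambda>\<sigma>. f \<sigma> + g \<sigma>) \<sigma> \<le> T f \<sigma> + T g \<sigma>"
  by (simp add: subadditive_def le_fun_def)

lemma propagates_constantsI: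
  "(\<And>c f \<sigma>. T (\<lambda>\<sigma>. c + f \<sigma>) \<sigma> \<le> c + T f \<sigma>) \<Longrightarrow> propagates_constants T"
  by (simp add: propagates_constants_def le_fun_def)

lemma propagates_constantsD: "propagates_constants T \<Longrightarrow> T (\<lambda>\<sigma>. c + f \<sigma>) \<sigma> \<le> c + T f \<sigma>"
  by (simp add: propagates_constants_def le_fun_def)

lemma healthy_mono: "healthy T \<Longrightarrow> mono T"
  by (simp add: healthy_def sup_continuous_mono)

lemma healthy_eval: "healthy (\<lambda>f \<sigma>. f (\<phi> \<sigma>))"
  unfolding healthy_def subadditive_def propagates_constants_def
  by (auto intro: sup_continuous_fun sup_continuous_apply)

lemma healthy_SUP:
  fixes T :: "'i \<Rightarrow> 's transformer"
  assumes "\<And>i. healthy (T i)"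
  shows "healthy (\<lambda>f \<sigma>. SUP i\<in>I \<sigma>. T i f \<sigma>)"
  unfolding healthy_def
proof (intro conjI subadditiveI propagates_constantsI)
  from assms have sc: "sup_continuous (T i)" and sa: "subadditive (T i)"
    and pc: "propagates_constants (T i)" for i
    by (simp_all add: healthy_def)
  have "sup_continuous (\<lambda>f. SUP i\<in>I \<sigma>. T i f \<sigma>)" for \<sigma>
    by (intro sup_continuous_apply_SUP sup_continuous_applyD[OF sc])
  then show "sup_continuous (\<lambda>f \<sigma>. SUP i\<in>I \<sigma>. T i f \<sigma>)"
    by (intro sup_continuous_fun)
  fix f g :: "'s \<Rightarrow> ennreal" and c \<sigma>
  show "(SUP i\<in>I \<sigma>. T i (\<lambda>\<sigma>. f \<sigma> + g \<sigma>) \<sigma>) \<le> (SUP i\<in>I \<sigma>. T i f \<sigma>) + (SUP i\<in>I \<sigma>. T i g \<sigma>)"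
    by (intro SUP_least order_trans[OF subadditiveD[OF sa]] add_mono SUP_upper)
  show "(SUP i\<in>I \<sigma>. T i (\<lambda>\<sigma>. c + f \<sigma>) \<sigma>) \<le> c + (SUP i\<in>I \<sigma>. T i f \<sigma>)"
    by (intro SUP_least order_trans[OF propagates_constantsD[OF pc]] add_mono order_refl SUP_upper)
qed

lemma healthy_add_left:
  fixes T :: "'s transformer"
  assumes "healthy T"
  shows "healthy (\<lambda>f \<sigma>. c \<sigma> + T f \<sigma>)"
  unfolding healthy_def
proof (intro conjI subadditiveI propagates_constantsI)
  from assms have sc: "sup_continuous T" and sa: "subadditive T" and pc: "propagates_constants T"
    by (simp_all add: healthy_def)
  show "sup_continuous (\<lambda>f \<sigma>. c \<sigma> + T f \<sigma>)"
    by (intro sup_continuous_fun sup_continuous_add_ennreal sup_continuous_const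
        sup_continuous_applyD[OF sc])
  show "c \<sigma> + T (\<lambda>\<sigma>. f \<sigma> + g \<sigma>) \<sigma> \<le> (c \<sigma> + T f \<sigma>) + (c \<sigma> + T g \<sigma>)" for f g \<sigma>
  proof -
    have "c \<sigma> + T (\<lambda>\<sigma>. f \<sigma> + g \<sigma>) \<sigma> \<le> c \<sigma> + (T f \<sigma> + T g \<sigma>)"
      using subadditiveD[OF sa] by (rule add_left_mono)
    also have "\<dots> \<le> (c \<sigma> + T f \<sigma>) + (c \<sigma> + T g \<sigma>)"
      by (simp add: add_ac add_increasing)
    finally show ?thesis .
  qed
  show "c \<sigma> + T (\<lambda>\<sigma>. k + f \<sigma>) \<sigma> \<le> k + (c \<sigma> + T f \<sigma>)" for k f \<sigma>
    using add_left_mono[OF propagates_constantsD[OF pc]] by (simp add: add_ac)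
qed

lemma healthy_if_top:
  fixes T :: "'s transformer"
  assumes "healthy T"
  shows "healthy (\<lambda>f \<sigma>. if P \<sigma> then T f \<sigma> else top)"
  unfolding healthy_def
proof (intro conjI subadditiveI propagates_constantsI)
  from assms have sc: "sup_continuous T" and sa: "subadditive T" and pc: "propagates_constants T"
    by (simp_all add: healthy_def)
  show "sup_continuous (\<lambda>f \<sigma>. if P \<sigma> then T f \<sigma> else top)"
    by (intro sup_continuous_fun sup_continuous_If sup_continuous_const sup_continuous_applyD[OF sc])
  show "(if P \<sigma> then T (\<lambda>\<sigma>. f \<sigma> + g \<sigma>) \<sigma> else top)
    \<le> (if P \<sigma> then T f \<sigma> else top) + (if P \<sigma> then T g \<sigma> else top)" for f g \<sigma>
    using subadditiveD[OF sa] by simp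
  show "(if P \<sigma> then T (\<lambda>\<sigma>. k + f \<sigma>) \<sigma> else top) \<le> k + (if P \<sigma> then T f \<sigma> else top)"
    for k f \<sigma>
    using propagates_constantsD[OF pc] by simp
qed

lemma healthy_comp:
  fixes T\<^sub>1 T\<^sub>2 :: "'s transformer"
  assumes "healthy T\<^sub>1" and "healthy T\<^sub>2"
  shows "healthy (\<lambda>f. T\<^sub>1 (T\<^sub>2 f))"
  unfolding healthy_def subadditive_def propagates_constants_def
proof (intro conjI allI)
  from assms have sc: "sup_continuous T\<^sub>1" "sup_continuous T\<^sub>2"
    and sa: "subadditive T\<^sub>1" "subadditive T\<^sub>2"
    and pc: "propagates_constants T\<^sub>1" "propagates_constants T\<^sub>2"
    by (simp_all add: healthy_def)
  have mono1: "mono T\<^sub>1"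
    by (rule healthy_mono[OF assms(1)])
  show "sup_continuous (\<lambda>f. T\<^sub>1 (T\<^sub>2 f))"
    by (rule sup_continuous_compose[OF sc])
  fix f g :: "'s \<Rightarrow> ennreal" and c
  have "T\<^sub>1 (T\<^sub>2 (\<lambda>\<sigma>. f \<sigma> + g \<sigma>)) \<le> T\<^sub>1 (\<lambda>\<sigma>. T\<^sub>2 f \<sigma> + T\<^sub>2 g \<sigma>)"
    using sa(2) by (intro monoD[OF mono1]) (simp add: subadditive_def)
  also have "\<dots> \<le> (\<lambda>\<sigma>. T\<^sub>1 (T\<^sub>2 f) \<sigma> + T\<^sub>1 (T\<^sub>2 g) \<sigma>)"
    using sa(1) by (simp add: subadditive_def)
  finally show "T\<^sub>1 (T\<^sub>2 (\<lambda>\<sigma>. f \<sigma> + g \<sigma>)) \<le> (\<lambda>\<sigma>. T\<^sub>1 (T\<^sub>2 f) \<sigma> + T\<^sub>1 (T\<^sub>2 g) \<sigma>)" .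
  have "T\<^sub>1 (T\<^sub>2 (\<lambda>\<sigma>. c + f \<sigma>)) \<le> T\<^sub>1 (\<lambda>\<sigma>. c + T\<^sub>2 f \<sigma>)"
    using pc(2) by (intro monoD[OF mono1]) (simp add: propagates_constants_def)
  also have "\<dots> \<le> (\<lambda>\<sigma>. c + T\<^sub>1 (T\<^sub>2 f) \<sigma>)"
    using pc(1) by (simp add: propagates_constants_def)
  finally show "T\<^sub>1 (T\<^sub>2 (\<lambda>\<sigma>. c + f \<sigma>)) \<le> (\<lambda>\<sigma>. c + T\<^sub>1 (T\<^sub>2 f) \<sigma>)" .
qed

lemma healthy_subconvex_comb:
  fixes T\<^sub>1 T\<^sub>2 :: "'s transformer"
  assumes "healthy T\<^sub>1" and "healthy T\<^sub>2" and weights: "\<And>\<sigma>. a \<sigma> + b \<sigma> \<le> 1"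
  shows "healthy (\<lambda>f \<sigma>. a \<sigma> * T\<^sub>1 f \<sigma> + b \<sigma> * T\<^sub>2 f \<sigma>)"
  unfolding healthy_def
proof (intro conjI subadditiveI propagates_constantsI)
  from assms have sc: "sup_continuous T\<^sub>1" "sup_continuous T\<^sub>2"
    and sa: "subadditive T\<^sub>1" "subadditive T\<^sub>2"
    and pc: "propagates_constants T\<^sub>1" "propagates_constants T\<^sub>2"
    by (simp_all add: healthy_def)
  show "sup_continuous (\<lambda>f \<sigma>. a \<sigma> * T\<^sub>1 f \<sigma> + b \<sigma> * T\<^sub>2 f \<sigma>)"
    by (intro sup_continuous_fun sup_continuous_add_ennreal sup_continuous_mult_left_ennreal
        sup_continuous_applyD[OF sc(1)] sup_continuous_applyD[OF sc(2)])
  fix f g :: "'s \<Rightarrow> ennreal" and c \<sigma>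
  have "a \<sigma> * T\<^sub>1 (\<lambda>\<sigma>. f \<sigma> + g \<sigma>) \<sigma> + b \<sigma> * T\<^sub>2 (\<lambda>\<sigma>. f \<sigma> + g \<sigma>) \<sigma>
      \<le> a \<sigma> * (T\<^sub>1 f \<sigma> + T\<^sub>1 g \<sigma>) + b \<sigma> * (T\<^sub>2 f \<sigma> + T\<^sub>2 g \<sigma>)"
    by (intro add_mono mult_left_mono subadditiveD[OF sa(1)] subadditiveD[OF sa(2)]) simp_all
  also have "\<dots> = (a \<sigma> * T\<^sub>1 f \<sigma> + b \<sigma> * T\<^sub>2 f \<sigma>) + (a \<sigma> * T\<^sub>1 g \<sigma> + b \<sigma> * T\<^sub>2 g \<sigma>)"
    by (simp add: distrib_left add_ac)
  finally show "a \<sigma> * T\<^sub>1 (\<lambda>\<sigma>. f \<sigma> + g \<sigma>) \<sigma> + b \<sigma> * T\<^sub>2 (\<lambda>\<sigma>. f \<sigma> + g \<sigma>) \<sigma>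
      \<le> (a \<sigma> * T\<^sub>1 f \<sigma> + b \<sigma> * T\<^sub>2 f \<sigma>) + (a \<sigma> * T\<^sub>1 g \<sigma> + b \<sigma> * T\<^sub>2 g \<sigma>)" .
  have "a \<sigma> * T\<^sub>1 (\<lambda>\<sigma>. c + f \<sigma>) \<sigma> + b \<sigma> * T\<^sub>2 (\<lambda>\<sigma>. c + f \<sigma>) \<sigma>
      \<le> a \<sigma> * (c + T\<^sub>1 f \<sigma>) + b \<sigma> * (c + T\<^sub>2 f \<sigma>)"
    by (intro add_mono mult_left_mono propagates_constantsD[OF pc(1)] propagates_constantsD[OF pc(2)])
      simp_all
  also have "\<dots> = (a \<sigma> + b \<sigma>) * c + (a \<sigma> * T\<^sub>1 f \<sigma> + b \<sigma> * T\<^sub>2 f \<sigma>)"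
    by (simp add: distrib_left distrib_right add_ac)
  also have "\<dots> \<le> c + (a \<sigma> * T\<^sub>1 f \<sigma> + b \<sigma> * T\<^sub>2 f \<sigma>)"
    using mult_right_mono[OF weights, of c] by (intro add_right_mono) simp
  finally show "a \<sigma> * T\<^sub>1 (\<lambda>\<sigma>. c + f \<sigma>) \<sigma> + b \<sigma> * T\<^sub>2 (\<lambda>\<sigma>. c + f \<sigma>) \<sigma>
      \<le> c + (a \<sigma> * T\<^sub>1 f \<sigma> + b \<sigma> * T\<^sub>2 f \<sigma>)" .
qed

lemma sup_continuous_lfp_loop:
  fixes T :: "'s transformer"
  assumes "sup_continuous T"
  shows "sup_continuous (\<lambda>f. lfp (\<lambda>g \<sigma>. a \<sigma> * f \<sigma> + b \<sigma> * T g \<sigma>))"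
proof (rule sup_continuous_lfp'')
  show "sup_continuous (\<lambda>g \<sigma>. a \<sigma> * f \<sigma> + b \<sigma> * T g \<sigma>)" for f :: "'s \<Rightarrow> ennreal"
    by (intro sup_continuous_fun sup_continuous_add_ennreal sup_continuous_const
        sup_continuous_mult_left_ennreal sup_continuous_applyD[OF assms])
  fix G :: "'s transformer"
  assume "sup_continuous G"
  then have TG: "sup_continuous (\<lambda>f. T (G f))"
    by (rule sup_continuous_compose[OF assms])
  show "sup_continuous (\<lambda>f \<sigma>. a \<sigma> * f \<sigma> + b \<sigma> * T (G f) \<sigma>)"
    by (intro sup_continuous_fun sup_continuous_add_ennreal sup_continuous_mult_left_ennreal
        sup_continuous_apply sup_continuous_applyD[OF TG])
qed

lemma subadditive_lfp_loop:
  fixes T :: "'s transformer"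
  assumes "mono T" and "subadditive T"
  shows "subadditive (\<lambda>f. lfp (\<lambda>g \<sigma>. a \<sigma> * f \<sigma> + b \<sigma> * T g \<sigma>))"
  unfolding subadditive_def
proof (intro allI lfp_lowerbound le_funI)
  define \<Phi> :: "('s \<Rightarrow> ennreal) \<Rightarrow> 's transformer"
    where "\<Phi> f g \<sigma> = a \<sigma> * f \<sigma> + b \<sigma> * T g \<sigma>" for f g \<sigma>
  have fixp: "\<Phi> f (lfp (\<Phi> f)) = lfp (\<Phi> f)" for f
    using assms(1) by (intro lfp_fixpoint) (auto simp: \<Phi>_def mono_def le_fun_def mult_left_mono)
  fix f g :: "'s \<Rightarrow> ennreal" and \<sigma>
  let ?L = "\<lambda>\<sigma>. lfp (\<Phi> f) \<sigma> + lfp (\<Phi> g) \<sigma>"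
  have "\<Phi> (\<lambda>\<sigma>. f \<sigma> + g \<sigma>) ?L \<sigma>
      \<le> a \<sigma> * (f \<sigma> + g \<sigma>) + b \<sigma> * (T (lfp (\<Phi> f)) \<sigma> + T (lfp (\<Phi> g)) \<sigma>)"
    unfolding \<Phi>_def by (intro add_mono mult_left_mono subadditiveD[OF assms(2)]) simp_all
  also have "\<dots> = \<Phi> f (lfp (\<Phi> f)) \<sigma> + \<Phi> g (lfp (\<Phi> g)) \<sigma>"
    unfolding \<Phi>_def by (simp add: distrib_left add_ac)
  finally show "\<Phi> (\<lambda>\<sigma>. f \<sigma> + g \<sigma>) ?L \<sigma> \<le> ?L \<sigma>"
    by (simp only: fixp)
qed

lemma propagates_constants_lfp_loop:
  fixes T :: "'s transformer"
  assumes "mono T" and "propagates_constants T" and weights: "\<And>\<sigma>. a \<sigma> + b \<sigma> \<le> 1"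
  shows "propagates_constants (\<lambda>f. lfp (\<lambda>g \<sigma>. a \<sigma> * f \<sigma> + b \<sigma> * T g \<sigma>))"
  unfolding propagates_constants_def
proof (intro allI lfp_lowerbound le_funI)
  define \<Phi> :: "('s \<Rightarrow> ennreal) \<Rightarrow> 's transformer"
    where "\<Phi> f g \<sigma> = a \<sigma> * f \<sigma> + b \<sigma> * T g \<sigma>" for f g \<sigma>
  have fixp: "\<Phi> f (lfp (\<Phi> f)) = lfp (\<Phi> f)" for f
    using assms(1) by (intro lfp_fixpoint) (auto simp: \<Phi>_def mono_def le_fun_def mult_left_mono)
  fix f :: "'s \<Rightarrow> ennreal" and c \<sigma>
  let ?L = "\<lambda>\<sigma>. c + lfp (\<Phi> f) \<sigma>"
  have "\<Phi> (\<lambda>\<sigma>. c + f \<sigma>) ?L \<sigma> \<le> a \<sigma> * (c + f \<sigma>) + b \<sigma> * (c + T (lfp (\<Phi> f)) \<sigma>)"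
    unfolding \<Phi>_def by (intro add_mono mult_left_mono propagates_constantsD[OF assms(2)]) simp_all
  also have "\<dots> = (a \<sigma> + b \<sigma>) * c + \<Phi> f (lfp (\<Phi> f)) \<sigma>"
    unfolding \<Phi>_def by (simp add: distrib_left distrib_right add_ac)
  also have "\<dots> \<le> c + \<Phi> f (lfp (\<Phi> f)) \<sigma>"
    using mult_right_mono[OF weights, of c] by (intro add_right_mono) simp
  finally show "\<Phi> (\<lambda>\<sigma>. c + f \<sigma>) ?L \<sigma> \<le> ?L \<sigma>"
    by (simp only: fixp)
qed

lemma healthy_lfp:
  fixes T :: "'s transformer"
  assumes "healthy T" and "\<And>\<sigma>. a \<sigma> + b \<sigma> \<le> 1"
  shows "healthy (\<lambda>f. lfp (\<lambda>g \<sigma>. a \<sigma> * f \<sigma> + b \<sigma> * T g \<sigma>))"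
  using assms healthy_mono[OF assms(1)]
  by (simp add: healthy_def sup_continuous_lfp_loop subadditive_lfp_loop propagates_constants_lfp_loop)

section \<open>Heaps and heap predicates\<close>

lemma hmap_Abs_heap: "finite (dom m) \<Longrightarrow> 0 \<notin> dom m \<Longrightarrow> hmap (Abs_heap m) = m"
  by (simp add: Abs_heap_inverse)

lemma finite_dom_hmap: "finite (dom (hmap h))"
  and zero_notin_dom_hmap: "0 \<notin> dom (hmap h)"
  using hmap[of h] by auto

lemma hmap_hemp [simp]: "hmap hemp = Map.empty"
  by (simp add: hemp_def hmap_Abs_heap)

lemma hmap_hunion [simp]: "hmap (hunion h1 h2) = hmap h1 ++ hmap h2"
  by (simp add: hunion_def hmap_Abs_heap finite_dom_hmap zero_notin_dom_hmap)

definition hdel :: "heap \<Rightarrow> nat \<Rightarrow> heap" where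
  "hdel h a = Abs_heap ((hmap h)(a := None))"

lemma hmap_hdel [simp]: "hmap (hdel h a) = (hmap h)(a := None)"
  by (simp add: hdel_def hmap_Abs_heap finite_dom_hmap zero_notin_dom_hmap)

definition hupd :: "heap \<Rightarrow> nat \<Rightarrow> nat \<Rightarrow> heap" where
  "hupd h a v = Abs_heap ((hmap h)(a \<mapsto> v))"

lemma hmap_hupd [simp]: "a \<noteq> 0 \<Longrightarrow> hmap (hupd h a v) = (hmap h)(a \<mapsto> v)"
  by (simp add: hupd_def hmap_Abs_heap finite_dom_hmap zero_notin_dom_hmap)

lemma hupd_hdel [simp]: "hupd (hdel h a) a v = hupd h a v"
  by (simp add: hupd_def)

lemma hupd_triv: "hmap h a = Some v \<Longrightarrow> hupd h a v = h"
  by (simp add: hupd_def map_upd_triv hmap_inverse)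

lemma heap_eqI: "hmap h1 = hmap h2 \<Longrightarrow> h1 = h2"
  by (simp add: hmap_inject)

lemma hunion_hemp_left [simp]: "hunion hemp h = h"
  by (rule heap_eqI) simp

lemma sep_conj_tm: "sep_conj (tm e) f (s, h) = of_nat (e s) + f (s, h)"
proof -
  have "sep_conj (tm e) f (s, h) \<le> tm e (s, hemp) + f (s, h)"
    unfolding sep_conj_def by (auto simp: hdisj_def intro!: INF_lower2[of "(hemp, h)"])
  moreover have "tm e (s, hemp) + f (s, h) \<le> sep_conj (tm e) f (s, h)"
    unfolding sep_conj_def by (auto simp: tm_def intro!: INF_greatest)
  ultimately show ?thesis
    by (simp add: tm_def)
qed

lemma hunion_cell:
  assumes "hdisj h1 h2" and "dom (hmap h1) = {a}"
  shows "hdel (hunion h1 h2) a = h2" and "hmap (hunion h1 h2) a = hmap h1 a"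
proof -
  have h2_a: "hmap h2 a = None"
    using assms by (auto simp: hdisj_def)
  have h1_other: "hmap h1 x = None" if "x \<noteq> a" for x
    using assms(2) that by auto
  show "hdel (hunion h1 h2) a = h2"
    by (intro heap_eqI ext) (auto simp: map_add_def h2_a h1_other split: option.split)
  show "hmap (hunion h1 h2) a = hmap h1 a"
    by (simp add: map_add_def h2_a)
qed

lemma split_off_cell:
  assumes "a \<in> dom (hmap h)"
  obtains h1 where "hdisj h1 (hdel h a)" and "hunion h1 (hdel h a) = h"
    and "dom (hmap h1) = {a}" and "hmap h1 a = hmap h a"
proof
  define c where "c = Abs_heap (hmap h |` {a})"
  have "a \<noteq> 0"
    using assms zero_notin_dom_hmap[of h] by auto
  then have c: "hmap c = hmap h |` {a}"
    unfolding c_def by (intro hmap_Abs_heap) auto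
  show "hdisj c (hdel h a)"
    by (auto simp: hdisj_def c)
  show "hunion c (hdel h a) = h"
    by (intro heap_eqI ext) (auto simp: c map_add_def restrict_map_def split: option.split)
  show "dom (hmap c) = {a}"
    using assms by (auto simp: c)
  show "hmap c a = hmap h a"
    by (simp add: c)
qed

lemma sep_conj_cell:
  assumes A: "\<And>h1. A (s, h1) = (if dom (hmap h1) = {a} \<and> R (hmap h1 a) then 0 else top)"
  shows "sep_conj A G (s, h) = (if a \<in> dom (hmap h) \<and> R (hmap h a) then G (s, hdel h a) else top)"
    (is "_ = ?rhs")
proof (rule antisym)
  have "?rhs \<le> A (s, fst p) + G (s, snd p)"
    if mem: "p \<in> {(h1, h2). hdisj h1 h2 \<and> h = hunion h1 h2}" for p
  proof -
    obtain h1 h2 where p: "p = (h1, h2)" and split: "hdisj h1 h2" "h = hunion h1 h2"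
      using mem by (cases p) auto
    show ?thesis
    proof (cases "dom (hmap h1) = {a} \<and> R (hmap h1 a)")
      case True
      then have "hdel h a = h2" and "hmap h a = hmap h1 a"
        using hunion_cell[OF split(1)] split(2) by auto
      with True show ?thesis
        by (auto simp: A p)
    next
      case False
      then show ?thesis
        by (auto simp: A p)
    qed
  qed
  then show "?rhs \<le> sep_conj A G (s, h)"
    unfolding sep_conj_def by (simp only: case_prod_conv) (rule INF_greatest)
  show "sep_conj A G (s, h) \<le> ?rhs"
  proof (cases "a \<in> dom (hmap h) \<and> R (hmap h a)")
    case True
    then obtain h1 where "hdisj h1 (hdel h a)" "hunion h1 (hdel h a) = h"
      and h1: "dom (hmap h1) = {a}" "hmap h1 a = hmap h a"
      using split_off_cell by blast
    then have "sep_conj A G (s, h) \<le> A (s, h1) + G (s, hdel h a)"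
      unfolding sep_conj_def by (auto intro!: INF_lower2[of "(h1, hdel h a)"])
    with True h1 show ?thesis
      by (simp add: A)
  qed auto
qed

lemma sep_conj_pts_any:
  "sep_conj (pts_any e) G (s, h) = (if e s \<in> dom (hmap h) then G (s, hdel h (e s)) else top)"
  by (rule sep_conj_cell[where R = "\<lambda>_. True", simplified]) (simp add: pts_any_def)

lemma sep_conj_pts:
  "sep_conj (pts e e') G (s, h) = (if hmap h (e s) = Some (e' s) then G (s, hdel h (e s)) else top)"
  using sep_conj_cell[of "pts e e'" s "e s" "\<lambda>v. v = Some (e' s)" G h]
  by (auto simp: pts_def)

(* Heap predicates as runtimes: 0 where the predicate holds, infinity where it fails. *)
definition qualitative :: "('s \<Rightarrow> ennreal) \<Rightarrow> bool" where
  "qualitative A \<longleftrightarrow> (\<forall>\<sigma>. A \<sigma> = 0 \<or> A \<sigma> = top)"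

lemma qualitative_pts: "qualitative (pts e e')"
  by (simp add: qualitative_def pts_def split: prod.split)

lemma qualitative_emp_rt: "qualitative emp_rt"
  by (simp add: qualitative_def emp_rt_def split: prod.split)

lemma qualitative_sep_conj:
  fixes A B :: "'v rt"
  assumes "qualitative A" and "qualitative B"
  shows "qualitative (sep_conj A B)"
  unfolding qualitative_def
proof (intro allI)
  fix \<sigma> :: "'v stack \<times> heap"
  obtain s h where \<sigma>: "\<sigma> = (s, h)"
    by fastforce
  let ?X = "{(h1, h2). hdisj h1 h2 \<and> h = hunion h1 h2}"
  let ?t = "\<lambda>p. A (s, fst p) + B (s, snd p)"
  have t: "?t p = 0 \<or> ?t p = top" for p
  proof -
    have "A (s, fst p) = 0 \<or> A (s, fst p) = top" and "B (s, snd p) = 0 \<or> B (s, snd p) = top"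
      using assms by (simp_all add: qualitative_def)
    then show ?thesis
      by auto
  qed
  have "(INF p\<in>?X. ?t p) = 0 \<or> (INF p\<in>?X. ?t p) = top"
  proof (cases "\<exists>p\<in>?X. ?t p = 0")
    case True
    then obtain p where "p \<in> ?X" and "?t p = 0"
      by blast
    then have "(INF p\<in>?X. ?t p) \<le> ?t p"
      by (intro INF_lower)
    with \<open>?t p = 0\<close> show ?thesis
      by simp
  next
    case False
    with t have "\<forall>p\<in>?X. ?t p = top"
      by blast
    then have "(INF p\<in>?X. ?t p) = top"
      by (simp only: INF_top_conv)
    then show ?thesis ..
  qed
  then show "sep_conj A B \<sigma> = 0 \<or> sep_conj A B \<sigma> = top"
    unfolding sep_conj_def \<sigma> by (simp only: case_prod_conv)
qed

lemma qualitative_bigsep: "(\<And>i. qualitative (F i)) \<Longrightarrow> qualitative (bigsep n F)"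
  by (induction n) (simp_all add: qualitative_emp_rt qualitative_sep_conj)

lemma qualitative_bigsep_e:
  assumes "\<And>i. qualitative (F i)"
  shows "qualitative (bigsep_e e F)"
  using qualitative_bigsep[OF assms] by (simp add: qualitative_def bigsep_e_def)

lemma sep_wand_qualitative:
  assumes "qualitative A"
  shows "sep_wand A g (s, h) = (SUP h'\<in>{h'. hdisj h' h \<and> A (s, h') = 0}. g (s, hunion h h'))"
    (is "_ = (SUP h'\<in>?H. ?g h')")
proof -
  have tsub: "tsub (?g h') (A (s, h')) = (if A (s, h') = 0 then ?g h' else 0)" for h'
    using assms by (auto simp: qualitative_def tsub_def)
  show ?thesis
  proof (rule antisym)
    have "tsub (?g h') (A (s, h')) \<le> (SUP h'\<in>?H. ?g h')" if "hdisj h' h" for h'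
      using that by (auto simp: tsub intro: SUP_upper)
    then show "sep_wand A g (s, h) \<le> (SUP h'\<in>?H. ?g h')"
      unfolding sep_wand_def by (simp only: case_prod_conv) (rule SUP_least, simp)
    have "?g h' \<le> sep_wand A g (s, h)" if "h' \<in> ?H" for h'
    proof -
      have "?g h' = tsub (?g h') (A (s, h'))"
        using that by (simp add: tsub_def)
      also have "\<dots> \<le> sep_wand A g (s, h)"
        unfolding sep_wand_def using that by (simp only: case_prod_conv) (rule SUP_upper, simp)
      finally show ?thesis .
    qed
    then show "(SUP h'\<in>?H. ?g h') \<le> sep_wand A g (s, h)"
      by (rule SUP_least)
  qed
qed

lemma sep_wand_pts:
  assumes "e s \<notin> dom (hmap h)" and "e s \<noteq> 0"
  shows "sep_wand (pts e e') g (s, h) = g (s, hupd h (e s) (e' s))"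
proof -
  let ?H = "{h'. hdisj h' h \<and> pts e e' (s, h') = 0}"
  have "hunion h h' = hupd h (e s) (e' s)" if "h' \<in> ?H" for h'
  proof -
    from that have "hmap h' = [e s \<mapsto> e' s]"
      by (auto simp: pts_def fun_eq_iff split: if_splits)
    with assms show ?thesis
      by (intro heap_eqI) (simp add: map_add_def fun_eq_iff split: option.split)
  qed
  then have "sep_wand (pts e e') g (s, h) = (SUP h'\<in>?H. g (s, hupd h (e s) (e' s)))"
    by (simp add: sep_wand_qualitative[OF qualitative_pts])
  moreover have "Abs_heap [e s \<mapsto> e' s] \<in> ?H"
    using assms by (auto simp: pts_def hdisj_def hmap_Abs_heap)
  ultimately show ?thesis
    by (auto simp: SUP_constant)
qed

section \<open>Healthiness of the expected runtime transformer\<close>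

lemma ert_Tick: "ert (Tick e) = (\<lambda>f (s, h). of_nat (e s) + f (s, h))"
  by (simp add: fun_eq_iff sep_conj_tm)

lemma ert_Assign: "ert (Assign x e) = (\<lambda>f (s, h). f (s(x := e s), h))"
  by (simp add: fun_eq_iff subst_def)

lemma ert_Free: "ert (Free e) = (\<lambda>f (s, h). if e s \<in> dom (hmap h) then f (s, hdel h (e s)) else top)"
  by (simp add: fun_eq_iff split_paired_All sep_conj_pts_any)

lemma ert_Store:
  "ert (Store e e') = (\<lambda>f (s, h). if e s \<in> dom (hmap h) then f (s, hupd h (e s) (e' s)) else top)"
  (is "_ = ?rhs")
proof (intro ext)
  fix f and \<sigma> :: "'a stack \<times> heap"
  obtain s h where \<sigma>: "\<sigma> = (s, h)"
    by fastforce
  have "e s \<in> dom (hmap h) \<Longrightarrow> e s \<noteq> 0"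
    using zero_notin_dom_hmap[of h] by auto
  then show "ert (Store e e') f \<sigma> = ?rhs f \<sigma>"
    by (auto simp: \<sigma> sep_conj_pts_any sep_wand_pts)
qed

lemma ert_Load:
  "ert (Load x e) = (\<lambda>f (s, h). if e s \<in> dom (hmap h) then f (s(x := the (hmap h (e s))), h) else top)"
  (is "_ = ?rhs")
proof (intro ext)
  fix f and \<sigma> :: "'a stack \<times> heap"
  obtain s h where \<sigma>: "\<sigma> = (s, h)"
    by fastforce
  have "hmap h (e s) = Some v \<Longrightarrow> e s \<noteq> 0" for v
    using zero_notin_dom_hmap[of h] by auto
  then have "sep_conj (pts e (\<lambda>_. v)) (sep_wand (pts e (\<lambda>_. v)) (subst f x (\<lambda>_. v))) (s, h)
      = (if hmap h (e s) = Some v then f (s(x := v), h) else top)" for v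
    by (auto simp: sep_conj_pts sep_wand_pts subst_def hupd_triv)
  then have "ert (Load x e) f \<sigma> = (INF v. if hmap h (e s) = Some v then f (s(x := v), h) else top)"
    by (simp only: \<sigma> ert.simps)
  also have "\<dots> = ?rhs f \<sigma>"
  proof (cases "hmap h (e s)")
    case None
    then show ?thesis
      by (simp add: \<sigma> domIff)
  next
    case (Some w)
    then have "(INF v. if hmap h (e s) = Some v then f (s(x := v), h) else top) = f (s(x := w), h)"
      by (intro antisym INF_lower2[of w] INF_greatest) auto
    with Some show ?thesis
      by (simp add: \<sigma> domIff)
  qed
  finally show "ert (Load x e) f \<sigma> = ?rhs f \<sigma>" .
qed

lemma ert_Alloc:
  "ert (Alloc x e) = (\<lambda>f (s, h). SUP v.
     SUP h'\<in>{h'. hdisj h' h \<and> bigsep_e e (\<lambda>i. pts (\<lambda>_. v + i - 1) (\<lambda>_. 0)) (s, h') = 0}.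
       f (s(x := v), hunion h h'))"
  by (simp add: fun_eq_iff split_paired_All sep_wand_qualitative qualitative_bigsep_e qualitative_pts
      subst_def)

lemma healthy_ert: "wf_prog C \<Longrightarrow> healthy (ert C)"
proof (induction C)
  case (Tick e)
  show ?case
    unfolding ert_Tick case_prod_unfold by (intro healthy_add_left healthy_eval)
next
  case (Assign x e)
  show ?case
    unfolding ert_Assign case_prod_unfold by (rule healthy_eval)
next
  case (Alloc x e)
  show ?case
    unfolding ert_Alloc case_prod_unfold by (intro healthy_SUP healthy_eval)
next
  case (Store e e')
  show ?case
    unfolding ert_Store case_prod_unfold by (intro healthy_if_top healthy_eval)
next
  case (Load x e)
  show ?case
    unfolding ert_Load case_prod_unfold by (intro healthy_if_top healthy_eval)
next
  case (Free e)
  show ?case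
    unfolding ert_Free case_prod_unfold by (intro healthy_if_top healthy_eval)
next
  case (PChoice C\<^sub>1 p C\<^sub>2)
  then have "0 \<le> p s" and "p s \<le> 1" for s
    by auto
  then have "ennreal (p s) + ennreal (1 - p s) \<le> 1" for s
    by (simp add: ennreal_plus[symmetric])
  with PChoice show ?case
    unfolding ert.simps by (intro healthy_subconvex_comb) auto
next
  case (If \<phi> C\<^sub>1 C\<^sub>2)
  then show ?case
    unfolding ert.simps
    by (intro healthy_subconvex_comb) (auto simp: iverson_def split: prod.split)
next
  case (Seq C\<^sub>1 C\<^sub>2)
  then show ?case
    unfolding ert.simps by (auto intro: healthy_comp)
next
  case (While \<phi> C)
  then show ?case
    unfolding ert.simps by (intro healthy_lfp) (auto simp: iverson_def split: prod.split)
qed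

theorem mainTheorem8:
  fixes C :: "('v::finite) prog" and F :: "nat \<Rightarrow> 'v rt" and f g u :: "'v rt"
  assumes wf: "wf_prog C"
    and chain: "incseq F"
    and const: "\<exists>c. u = (\<lambda>_. c)"
  shows "ert C (SUP i. F i) = (SUP i. ert C (F i))
    \<and> (f \<le> g \<longrightarrow> ert C f \<le> ert C g)
    \<and> ert C (\<lambda>\<sigma>. f \<sigma> + g \<sigma>) \<le> (\<lambda>\<sigma>. ert C f \<sigma> + ert C g \<sigma>)
    \<and> ert C (\<lambda>\<sigma>. u \<sigma> + f \<sigma>) \<le> (\<lambda>\<sigma>. u \<sigma> + ert C f \<sigma>)"
proof -
  have healthy: "healthy (ert C)"
    using wf by (rule healthy_ert)
  obtain c where u: "u = (\<lambda>_. c)"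
    using const by blast
  have "ert C (SUP i. F i) = (SUP i. ert C (F i))"
    using healthy chain by (simp add: healthy_def sup_continuousD)
  moreover have "f \<le> g \<longrightarrow> ert C f \<le> ert C g"
    using healthy_mono[OF healthy] by (simp add: monoD)
  ultimately show ?thesis
    using healthy by (simp add: healthy_def subadditive_def propagates_constants_def u)
qed

end
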